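(* Let $\Omega_n=\dfrac{\pi^{n/2}}{\Gamma\left(\frac n2+1\right)}$ for $n\in\mathbb{N}$. Define, for $n\in\mathbb{N}$, \[ \mu(n)=\frac{1}{6n^{2}}-\frac{1}{45n^{4}}+\frac{8}{315n^{6}}-\frac{8}{105n^{8}},\qquad \lambda(n)=\mu(n)+\frac{1}{128n^{10}}, \] \[ \alpha(n)=-\frac{n+1}{2n}\ln\frac{n}{2}+\frac12\ln(\pi e)-\frac{\ln 2\pi}{2n}-\lambda(n),\qquad \beta(n)=-\frac{n+1}{2n}\ln\frac{n}{2}+\frac12\ln(\pi e)-\frac{\ln 2\pi}{2n}-\mu(n). \] Then $\alpha(n)-\beta(n+1)>0$ for every $n\in\mathbb{N}$. In consequence, the sequence $\left\{\Omega_n^{1/n}\right\}_{n\ge1}$ decreases monotonically (to $0$).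
   Context: $\Omega_n$ is the volume of the unit ball in $\mathbb{R}^n$; $\Gamma$ is Euler's gamma function. The functions $\alpha,\beta$ satisfy $\alpha(n)<\frac1n\ln\Omega_n<\beta(n)$ for all $n\in\mathbb{N}$ (a previously known result). *)

theory Defs
  imports "HOL-Analysis.Analysis"
begin

definition Omega :: "nat \<Rightarrow> real" where
  "Omega n = pi powr (real n / 2) / Gamma (real n / 2 + 1)"

definition mu :: "nat \<Rightarrow> real" where
  "mu n = 1 / (6 * real n ^ 2) - 1 / (45 * real n ^ 4) + 8 / (315 * real n ^ 6)
          - 8 / (105 * real n ^ 8)"

definition lam :: "nat \<Rightarrow> real" where
  "lam n = mu n + 1 / (128 * real n ^ 10)"

definition alpha :: "nat \<Rightarrow> real" where
  "alpha n = - ((real n + 1) / (2 * real n)) * ln (real n / 2) + ln (pi * exp 1) / 2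
             - ln (2 * pi) / (2 * real n) - lam n"

definition beta :: "nat \<Rightarrow> real" where
  "beta n = - ((real n + 1) / (2 * real n)) * ln (real n / 2) + ln (pi * exp 1) / 2
             - ln (2 * pi) / (2 * real n) - mu n"

end

theory Submission
  imports Defs "HOL-Real_Asymp.Real_Asymp"
begin

text \<open>
  Clearing denominators, with \<open>x = n\<close> the difference \<open>\<alpha>(n) - \<beta>(n+1)\<close> becomes
  \<open>x(x+2) ln(1 + 1/x) - ln x - ln \<pi> - 2x(x+1)(\<lambda>(n) - \<mu>(n+1))\<close>, which is positive by
  \<open>ln(1+t) \<ge> t - t\<^sup>2/2\<close>, \<open>ln x \<le> x - 1\<close> and \<open>ln \<pi> \<le> 25/18\<close> (for \<open>n = 1\<close> one uses
  \<open>ln 2 \<ge> 2/3\<close> instead).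

  For the volumes, \<open>\<Omega>\<^sub>n\<^bsup>1/n\<^esub> = \<surd>\<pi> exp(-ln \<Gamma>(n/2+1) / n)\<close>. Since \<open>ln \<Gamma>\<close> is strictly convex
  and vanishes at 1, the slope \<open>ln \<Gamma>(x+1) / x\<close> increases strictly in \<open>x > 0\<close>, which gives
  the monotonicity. At an integer \<open>m\<close> the slope is \<open>ln(m!)/m \<ge> ln m - 1\<close>, because
  \<open>m\<^sup>m/m!\<close> is a single term of the series of \<open>e\<^sup>m\<close>; taking \<open>m = \<lfloor>n/2\<rfloor>\<close> shows that the
  slope at \<open>n/2\<close> tends to infinity, hence \<open>\<Omega>\<^sub>n\<^bsup>1/n\<^esub> \<rightarrow> 0\<close>.
\<close>

lemma ln_add_one_ge:
  fixes t :: real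
  assumes "0 \<le> t"
  shows "t - t^2 / 2 \<le> ln (1 + t)"
proof -
  let ?f = "\<lambda>s::real. ln (1 + s) - s + s^2 / 2"
  have "?f 0 \<le> ?f t"
  proof (rule DERIV_nonneg_imp_nondecreasing[OF assms])
    fix s :: real
    assume s: "0 \<le> s"
    have "(?f has_real_derivative s^2 / (1 + s)) (at s)"
      using s by (auto intro!: derivative_eq_intros simp: field_simps power2_eq_square)
    then show "\<exists>y. (?f has_real_derivative y) (at s) \<and> 0 \<le> y"
      using s by auto
  qed
  then show ?thesis
    by simp
qed

lemma ln_pi_le: "ln pi \<le> 25 / 18"
proof -
  have "ln pi \<le> ln (2 * 2 :: real)"
    using pi_less_4 by (subst ln_le_cancel_iff) auto
  also have "\<dots> = 2 * ln 2"
    using ln_mult[of "2::real" 2] by simp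
  also have "\<dots> \<le> 25 / 18"
    using ln2_le_25_over_36 by simp
  finally show ?thesis .
qed

lemma mu_nonneg:
  assumes "2 \<le> m"
  shows "0 \<le> mu m"
proof -
  define t where "t = real m ^ 2"
  have t: "4 \<le> t"
    using assms power_mono[of 2 "real m" 2] by (simp add: t_def)
  have mu_t: "mu m = 1 / (6 * t) - 1 / (45 * t^2) + 8 / (315 * t^3) - 8 / (105 * t^4)"
    by (simp add: mu_def t_def power_mult[symmetric])
  have "6 * t \<le> (45 * t) * t"
    using t by (intro mult_right_mono) auto
  then have "1 / (45 * t^2) \<le> 1 / (6 * t)"
    using t by (intro divide_left_mono) (auto simp: power2_eq_square)
  moreover have "315 * t^3 \<le> (105 * t) * t^3"
    using t by (intro mult_right_mono) auto
  then have "8 / (105 * t^4) \<le> 8 / (315 * t^3)"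
    using t by (intro divide_left_mono) (auto simp: power_Suc[symmetric] mult.assoc)
  ultimately show ?thesis
    unfolding mu_t by linarith
qed

lemma lam_le:
  assumes "2 \<le> n"
  shows "lam n \<le> 1 / (6 * real n ^ 2) + 1 / (30 * real n ^ 6)"
proof -
  define t where "t = real n ^ 2"
  have t: "4 \<le> t"
    using assms power_mono[of 2 "real n" 2] by (simp add: t_def)
  have lam_t: "lam n = 1 / (6 * t) - 1 / (45 * t^2) + 8 / (315 * t^3) - 8 / (105 * t^4)
                       + 1 / (128 * t^5)"
    by (simp add: lam_def mu_def t_def power_mult[symmetric])
  have "2048 * t^3 \<le> (128 * t^2) * t^3"
    using t power_mono[of 4 t 2] by (intro mult_right_mono) auto
  then have "1 / (128 * t^5) \<le> 1 / (2048 * t^3)"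
    using t by (intro divide_left_mono) (auto simp: power_add[symmetric] mult.assoc)
  moreover have "8 / (315 * t^3) + 1 / (2048 * t^3) \<le> 1 / (30 * t^3)"
    using t by (simp add: field_simps)
  moreover have "0 \<le> 1 / (45 * t^2)" "0 \<le> 8 / (105 * t^4)"
    using t by auto
  ultimately have "lam n \<le> 1 / (6 * t) + 1 / (30 * t^3)"
    unfolding lam_t by linarith
  then show ?thesis
    by (simp add: t_def power_mult[symmetric])
qed

lemma alpha_minus_beta_Suc_eq:
  assumes "1 \<le> n"
  shows "2 * real n * (real n + 1) * (alpha n - beta (n + 1)) =
           real n * (real n + 2) * ln ((real n + 1) / real n) - ln (real n) - ln pi
           - 2 * real n * (real n + 1) * (lam n - mu (n + 1))"
proof -
  define x where "x = real n"
  have x: "x \<noteq> 0" "x + 1 \<noteq> 0"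
    using assms by (auto simp: x_def)
  have "alpha n - beta (n + 1) =
      - ((x + 1) / (2 * x)) * (ln x - ln 2) - (ln 2 + ln pi) / (2 * x) - lam n
      + ((x + 2) / (2 * (x + 1))) * (ln (x + 1) - ln 2) + (ln 2 + ln pi) / (2 * (x + 1))
      + mu (n + 1)"
    using assms by (simp add: alpha_def beta_def x_def[symmetric] ln_div ln_mult add.commute)
  also have "ln (x + 1) = ln ((x + 1) / x) + ln x"
    using assms by (simp add: x_def ln_div)
  finally show ?thesis
    using x unfolding x_def[symmetric] by (simp add: divide_simps) (simp add: algebra_simps)
qed

lemma alpha_minus_beta_Suc_pos:
  assumes "1 \<le> n"
  shows "0 < alpha n - beta (n + 1)"
proof -
  define x where "x = real n"
  have x: "1 \<le> x"
    using assms by (simp add: x_def)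
  have "0 < x * (x + 2) * ln ((x + 1) / x) - ln x - ln pi - 2 * x * (x + 1) * (lam n - mu (n + 1))"
  proof (cases "n = 1")
    case True
    then show ?thesis
      using ln2_ge_two_thirds ln_pi_le by (simp add: x_def lam_def mu_def)
  next
    case False
    then have n2: "2 \<le> n"
      using assms by simp
    have x2: "2 \<le> x"
      using n2 by (simp add: x_def)
    have "x + 3/2 - 1/x = x * (x + 2) * (1/x - (1/x)^2 / 2)"
      using x by (simp add: field_simps power2_eq_square)
    also have "\<dots> \<le> x * (x + 2) * ln ((x + 1) / x)"
      using x ln_add_one_ge[of "1/x"] by (intro mult_left_mono) (auto simp: add_divide_distrib)
    finally have ln_term: "x + 3/2 - 1/x \<le> x * (x + 2) * ln ((x + 1) / x)" .
    have ln_x: "ln x \<le> x - 1"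
      using x by (intro ln_le_minus_one) auto
    have "2 * x * (x + 1) * lam n \<le> 2 * x * (x + 1) * (1 / (6 * x^2) + 1 / (30 * x^6))"
      using lam_le[OF n2] x by (intro mult_left_mono) (auto simp: x_def)
    also have "\<dots> = 1/3 + 1/(3*x) + 1/(15*x^4) + 1/(15*x^5)"
      using x by (simp add: field_simps power_def)
    finally have lam_term: "2 * x * (x + 1) * lam n \<le> 1/3 + 1/(3*x) + 1/(15*x^4) + 1/(15*x^5)" .
    have "0 \<le> 2 * x * (x + 1) * mu (n + 1)"
      using n2 x by (intro mult_nonneg_nonneg mu_nonneg) auto
    moreover have "1/x \<le> 1/2" "1/(3*x) \<le> 1/6"
      using x2 by (simp_all add: field_simps)
    moreover have "1/(15*x^4) \<le> 1/240" "1/(15*x^5) \<le> 1/480"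
      using x2 power_mono[of 2 x 4] power_mono[of 2 x 5] by (simp_all add: field_simps)
    ultimately show ?thesis
      using ln_term ln_x lam_term ln_pi_le unfolding right_diff_distrib by linarith
  qed
  then have "0 < 2 * x * (x + 1) * (alpha n - beta (n + 1))"
    using alpha_minus_beta_Suc_eq[OF assms] by (simp add: x_def)
  moreover have "0 < 2 * x * (x + 1)"
    using x by simp
  ultimately show ?thesis
    using zero_less_mult_pos by blast
qed

lemma ln_Gamma_plus_one_div_strict_mono:
  fixes a b :: real
  assumes "0 < a" "a < b"
  shows "ln_Gamma (a + 1) / a < ln_Gamma (b + 1) / b"
proof -
  have "\<exists>z. 1 < z \<and> z < a + 1 \<and> ln_Gamma (a + 1) - ln_Gamma 1 = (a + 1 - 1) * Digamma z"
    using assms by (intro MVT2) (auto intro!: derivative_intros)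
  then obtain z1 where z1: "1 < z1" "z1 < a + 1" "ln_Gamma (a + 1) - ln_Gamma 1 = a * Digamma z1"
    by auto
  have "\<exists>z. a + 1 < z \<and> z < b + 1
          \<and> ln_Gamma (b + 1) - ln_Gamma (a + 1) = (b + 1 - (a + 1)) * Digamma z"
    using assms by (intro MVT2) (auto intro!: derivative_intros)
  then obtain z2 where z2: "a + 1 < z2" "z2 < b + 1"
      "ln_Gamma (b + 1) - ln_Gamma (a + 1) = (b - a) * Digamma z2"
    by auto
  have "ln_Gamma (1::real) = 0"
    by (simp add: ln_Gamma_real_pos)
  then have ln_Gamma_a: "ln_Gamma (a + 1) = a * Digamma z1"
    using z1 by simp
  have "Digamma z1 < Digamma z2"
    using z1 z2 by (intro Digamma_real_strict_mono) auto
  then have "(b - a) * Digamma z1 < (b - a) * Digamma z2"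
    using assms by (intro mult_strict_left_mono) auto
  then have "b * Digamma z1 < ln_Gamma (b + 1)"
    using z2 ln_Gamma_a unfolding left_diff_distrib by linarith
  then show ?thesis
    using ln_Gamma_a assms by (simp add: pos_less_divide_eq mult.commute)
qed

lemma Omega_root_eq:
  assumes "0 < n"
  shows "Omega n powr (1 / real n) = exp (ln pi / 2 - ln_Gamma (real n / 2 + 1) / real n)"
proof -
  have Gamma_pos: "0 < Gamma (real n / 2 + 1)"
    by (intro Gamma_real_pos) simp
  then have "0 < Omega n"
    unfolding Omega_def by (intro divide_pos_pos) simp_all
  then have "Omega n powr (1 / real n) = exp (ln (Omega n) / real n)"
    by (simp add: powr_def)
  also have "ln (Omega n) = ln (pi powr (real n / 2)) - ln (Gamma (real n / 2 + 1))"
    unfolding Omega_def using Gamma_pos by (intro ln_divide_pos) auto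
  also have "\<dots> = real n / 2 * ln pi - ln_Gamma (real n / 2 + 1)"
    by (simp add: ln_powr ln_Gamma_real_pos)
  finally show ?thesis
    using assms by (simp add: diff_divide_distrib)
qed

lemma Omega_root_strict_decreasing:
  assumes "0 < n"
  shows "Omega (n + 1) powr (1 / real (n + 1)) < Omega n powr (1 / real n)"
proof -
  have "ln_Gamma (real n / 2 + 1) / (real n / 2)
        < ln_Gamma ((real n + 1) / 2 + 1) / ((real n + 1) / 2)"
    using assms by (intro ln_Gamma_plus_one_div_strict_mono) auto
  then have "2 * (ln_Gamma (real n / 2 + 1) / real n)
        < 2 * (ln_Gamma ((real n + 1) / 2 + 1) / (real n + 1))"
    by (simp add: mult.commute)
  then have "ln_Gamma (real n / 2 + 1) / real n < ln_Gamma ((real n + 1) / 2 + 1) / (real n + 1)"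
    by linarith
  then show ?thesis
    using Omega_root_eq[OF assms] Omega_root_eq[of "n + 1"] by (simp add: add.commute)
qed

lemma ln_fact_ge:
  assumes "0 < m"
  shows "real m * (ln (real m) - 1) \<le> ln (fact m)"
proof -
  have "(\<lambda>k. real m ^ k / fact k) sums exp (real m)"
    using exp_converges[of "real m"] by (simp add: field_simps)
  then have "real m ^ m / fact m \<le> exp (real m)"
    using sum_le_suminf[of "\<lambda>k. real m ^ k / fact k" "{m}"] by (simp add: sums_iff)
  then have "ln (real m ^ m) \<le> ln (exp (real m) * fact m)"
    using assms by (subst ln_le_cancel_iff) (auto simp: field_simps)
  then show ?thesis
    using assms by (simp add: ln_realpow ln_mult algebra_simps)
qed

lemma Omega_root_le:
  assumes "2 \<le> n"
  shows "Omega n powr (1 / real n) \<le> exp (ln pi / 2 - (ln ((real n - 1) / 2) - 1) / 2)"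
proof -
  define m where "m = n div 2"
  have m: "0 < m" "(real n - 1) / 2 \<le> real m" "real m \<le> real n / 2"
    using assms by (auto simp: m_def)
  have "ln_Gamma (real m + 1) / real m \<le> ln_Gamma (real n / 2 + 1) / (real n / 2)"
  proof (cases "real m = real n / 2")
    case True
    then show ?thesis
      by (simp only: order_refl)
  next
    case False
    then show ?thesis
      using m ln_Gamma_plus_one_div_strict_mono[of "real m" "real n / 2"] by simp
  qed
  also have "\<dots> = 2 * (ln_Gamma (real n / 2 + 1) / real n)"
    by simp
  moreover have "ln_Gamma (real m + 1) = ln (fact m)"
    using Gamma_fact[of m] by (simp add: ln_Gamma_real_pos add.commute)
  moreover have "ln (real m) - 1 \<le> ln (fact m) / real m"
    using ln_fact_ge[of m] m by (simp add: field_simps)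
  moreover have "ln ((real n - 1) / 2) \<le> ln (real m)"
    using m assms by (subst ln_le_cancel_iff) auto
  ultimately have "(ln ((real n - 1) / 2) - 1) / 2 \<le> ln_Gamma (real n / 2 + 1) / real n"
    by (simp add: field_simps)
  then show ?thesis
    using assms by (simp add: Omega_root_eq)
qed

lemma Omega_root_tendsto_zero: "(\<lambda>n. Omega n powr (1 / real n)) \<longlonglongrightarrow> 0"
proof (rule tendsto_sandwich)
  show "\<forall>\<^sub>F n in sequentially. 0 \<le> Omega n powr (1 / real n)"
    by simp
  show "\<forall>\<^sub>F n in sequentially.
          Omega n powr (1 / real n) \<le> exp (ln pi / 2 - (ln ((real n - 1) / 2) - 1) / 2)"
    using eventually_ge_at_top[of 2] by eventually_elim (rule Omega_root_le)
  show "(\<lambda>n::nat. exp (ln pi / 2 - (ln ((real n - 1) / 2) - 1) / 2)) \<longlonglongrightarrow> 0"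
    by real_asymp
qed simp

theorem theorem2:
  shows "(\<forall>n::nat. n \<ge> 1 \<longrightarrow> alpha n - beta (n + 1) > 0)
       \<and> (\<forall>n::nat. n \<ge> 1 \<longrightarrow>
            Omega (n + 1) powr (1 / real (n + 1)) < Omega n powr (1 / real n))
       \<and> ((\<lambda>n. Omega n powr (1 / real n)) \<longlonglongrightarrow> 0)"
  using alpha_minus_beta_Suc_pos Omega_root_strict_decreasing Omega_root_tendsto_zero by auto

end
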